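(* Let $(\mathbf{P},d_{\mathbf{P}})$ be a finite metric poset and $M,N,O$ be $\mathbf{P}$-modules. Let $E_\bullet,F_\bullet,G_\bullet$ be projective resolutions of $M,N,O$ respectively (each term with a fixed decomposition into indecomposable projectives) such that $|E_i|=|F_i|=|G_i|$ for all $i\ge0$. Then \[ \mathrm{dist}_{\mathrm{R}}(E_\bullet,G_\bullet)\ \le\ \mathrm{dist}_{\mathrm{R}}(E_\bullet,F_\bullet)+\mathrm{dist}_{\mathrm{R}}(F_\bullet,G_\bullet). \]
   Context: Fix a field $k$; $\mathrm{vect}$ is the category of finite-dimensional $k$-vector spaces; a finite poset is a category with a unique morphism $x\to y$ iff $x\le y$; a $\mathbf{P}$-module is a functor $\mathbf{P}\to\mathrm{vect}$; a finite metric poset is a finite poset with a metric $d_{\mathbf{P}}$. For $x\in\mathbf{P}$, $k[\mathbf{P}]_x$ is the $\mathbf{P}$-module with value $k$ at $y\ge x$ and $0$ elsewhere, identity structure maps; these are the indecomposable projectives. For $y\le x$, $\rho(x\ge y):k[\mathbf{P}]_x\to k[\mathbf{P}]_y$ is the canonical morphism (identity at each $z\ge x$), and $\rho(x\ge y)=0$ if $y\not\le x$. For projectives with decompositions $E=\bigoplus_{x\in\mathrm{smd}(E)}k[\mathbf{P}]_x$ and $F=\bigoplus_{y\in\mathrm{smd}(F)}k[\mathbf{P}]_y$ ($\mathrm{smd}$ = indexed multiset of summand indices), each $\alpha:E\to F$ is uniquely $[a_{x,y}\rho(x\ge y)]$ with $a_{x,y}\in k$, $a_{x,y}=0$ unless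 $x\ge y$; $\mathrm{Mat}(\alpha)=[a_{x,y}]$. A projective resolution $E_\bullet=(E_i,\partial^E_i:E_{i+1}\to E_i)_{i\ge0}$ has $|E_i|$ = number of summands of $E_i$. A matching of $(E_\bullet,F_\bullet)$ (when $|E_i|=|F_i|$ for all $i$) is a family of bijections $B_i:\mathrm{smd}(E_i)\to\mathrm{smd}(F_i)$ such that the $(x',x)$-entry of $\mathrm{Mat}(\partial^E_i)$ equals the $(B_{i+1}(x'),B_i(x))$-entry of $\mathrm{Mat}(\partial^F_i)$ for all $i\ge0$, $x\in\mathrm{smd}(E_i)$, $x'\in\mathrm{smd}(E_{i+1})$; its cost is $\sup\{d_{\mathbf{P}}(x,B_i(x))\mid i\ge0,x\in\mathrm{smd}(E_i)\}$. $\mathrm{dist}_{\mathrm{R}}(E_\bullet,F_\bullet)$ is the infimum of costs of matchings, and $\infty$ if there is no matching. *)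

theory Defs
  imports Complex_Main "HOL-Library.Extended_Nonnegative_Real"
begin

definition is_metric :: "('p \<Rightarrow> 'p \<Rightarrow> real) \<Rightarrow> bool" where
  "is_metric d \<longleftrightarrow> (\<forall>x y. d x y = 0 \<longleftrightarrow> x = y) \<and> (\<forall>x y. d x y = d y x)
     \<and> (\<forall>x y z. d x z \<le> d x y + d y z)"

text \<open>A P-module is given by a dimension at each point (M(z) = k^(dim z), vectors being
  functions nat \<Rightarrow> k vanishing from index dim z on) and a matrix for each structure map
  M(z \<le> w).\<close>

record ('p, 'k) pmod =
  mdim :: "'p \<Rightarrow> nat"
  mmat :: "'p \<Rightarrow> 'p \<Rightarrow> nat \<Rightarrow> nat \<Rightarrow> 'k"

definition mod_space :: "('p, 'k::zero) pmod \<Rightarrow> 'p \<Rightarrow> (nat \<Rightarrow> 'k) set" where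
  "mod_space M z = {v. \<forall>j. mdim M z \<le> j \<longrightarrow> v j = 0}"

definition mod_map :: "('p, 'k::comm_semiring_1) pmod \<Rightarrow> 'p \<Rightarrow> 'p \<Rightarrow> (nat \<Rightarrow> 'k) \<Rightarrow> (nat \<Rightarrow> 'k)" where
  "mod_map M z w v = (\<lambda>i. if i < mdim M w then (\<Sum>j<mdim M z. mmat M z w i j * v j) else 0)"

definition is_pmod :: "('p::order, 'k::field) pmod \<Rightarrow> bool" where
  "is_pmod M \<longleftrightarrow>
     (\<forall>z. \<forall>v\<in>mod_space M z. mod_map M z z v = v) \<and>
     (\<forall>x y z. x \<le> y \<longrightarrow> y \<le> z \<longrightarrow>
        (\<forall>v\<in>mod_space M x. mod_map M x z v = mod_map M y z (mod_map M x y v)))"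

text \<open>E_i = direct sum over j < rnum E i of k[P]_(rsmd E i j);
  the differential E_(i+1) \<rightarrow> E_i has Mat entries rmat E i x' x
  (x' a summand of E_(i+1), x a summand of E_i), i.e. it is [a_(x',x) \<rho>(x' \<ge> x)].\<close>

record ('p, 'k) presol =
  rnum :: "nat \<Rightarrow> nat"
  rsmd :: "nat \<Rightarrow> nat \<Rightarrow> 'p"
  rmat :: "nat \<Rightarrow> nat \<Rightarrow> nat \<Rightarrow> 'k"

text \<open>Value of E_i at z: k^{j | s_i j \<le> z}, as coordinate vectors.\<close>
definition proj_space :: "('p::order, 'k::zero) presol \<Rightarrow> nat \<Rightarrow> 'p \<Rightarrow> (nat \<Rightarrow> 'k) set" where
  "proj_space E i z = {v. \<forall>j. v j \<noteq> 0 \<longrightarrow> j < rnum E i \<and> rsmd E i j \<le> z}"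

text \<open>Component at any point z of the differential E_(i+1) \<rightarrow> E_i.\<close>
definition diff :: "('p, 'k::comm_semiring_1) presol \<Rightarrow> nat \<Rightarrow> (nat \<Rightarrow> 'k) \<Rightarrow> (nat \<Rightarrow> 'k)" where
  "diff E i v = (\<lambda>y. if y < rnum E i then (\<Sum>x<rnum E (Suc i). v x * rmat E i x y) else 0)"

text \<open>The matrices are those of morphisms of projectives: a_(x',x) = 0 unless
  s_(i+1) x' \<ge> s_i x (and entries outside the index ranges vanish).\<close>
definition presol_wf :: "('p::order, 'k::zero) presol \<Rightarrow> bool" where
  "presol_wf E \<longleftrightarrow> (\<forall>i x' x. rmat E i x' x \<noteq> 0 \<longrightarrow>
      x' < rnum E (Suc i) \<and> x < rnum E i \<and> rsmd E i x \<le> rsmd E (Suc i) x')"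

text \<open>Augmentation E_0 \<rightarrow> M at z; the morphism k[P]_(s_0 j) \<rightarrow> M on the j-th summand
  is determined (Yoneda) by the element g j \<in> M(s_0 j).\<close>
definition aug :: "('p::order, 'k::field) pmod \<Rightarrow> ('p, 'k) presol \<Rightarrow> (nat \<Rightarrow> nat \<Rightarrow> 'k)
    \<Rightarrow> 'p \<Rightarrow> (nat \<Rightarrow> 'k) \<Rightarrow> (nat \<Rightarrow> 'k)" where
  "aug M E g z v = (\<lambda>i. \<Sum>j\<in>{j. j < rnum E 0 \<and> rsmd E 0 j \<le> z}.
       v j * mod_map M (rsmd E 0 j) z (g j) i)"

definition is_proj_resolution :: "('p::order, 'k::field) pmod \<Rightarrow> ('p, 'k) presol \<Rightarrow> bool" where
  "is_proj_resolution M E \<longleftrightarrow> presol_wf E \<and>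
    (\<exists>g. (\<forall>j < rnum E 0. g j \<in> mod_space M (rsmd E 0 j)) \<and>
      (\<forall>z. aug M E g z ` proj_space E 0 z = mod_space M z \<and>
           {v \<in> proj_space E 0 z. aug M E g z v = (\<lambda>_. 0)} = diff E 0 ` proj_space E 1 z \<and>
           (\<forall>i. {v \<in> proj_space E (Suc i) z. diff E i v = (\<lambda>_. 0)}
                  = diff E (Suc i) ` proj_space E (Suc (Suc i)) z)))"

definition is_matching :: "('p, 'k) presol \<Rightarrow> ('p, 'k) presol \<Rightarrow> (nat \<Rightarrow> nat \<Rightarrow> nat) \<Rightarrow> bool" where
  "is_matching E F B \<longleftrightarrow>
     (\<forall>i. bij_betw (B i) {..<rnum E i} {..<rnum F i}) \<and>
     (\<forall>i x x'. x < rnum E i \<longrightarrow> x' < rnum E (Suc i) \<longrightarrow>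
        rmat E i x' x = rmat F i (B (Suc i) x') (B i x))"

definition matching_cost :: "('p \<Rightarrow> 'p \<Rightarrow> real) \<Rightarrow> ('p, 'k) presol \<Rightarrow> ('p, 'k) presol
    \<Rightarrow> (nat \<Rightarrow> nat \<Rightarrow> nat) \<Rightarrow> ennreal" where
  "matching_cost d E F B =
     (SUP p\<in>{(i, x). x < rnum E i}. ennreal (d (rsmd E (fst p) (snd p)) (rsmd F (fst p) (B (fst p) (snd p)))))"

definition distR :: "('p \<Rightarrow> 'p \<Rightarrow> real) \<Rightarrow> ('p, 'k) presol \<Rightarrow> ('p, 'k) presol \<Rightarrow> ennreal" where
  "distR d E F = (INF B\<in>{B. is_matching E F B}. matching_cost d E F B)"

end

theory Submission
  imports Defs
begin

text \<open>Matchings compose: following a matching of \<open>(E, F)\<close> by one of \<open>(F, G)\<close> gives a matching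
  of \<open>(E, G)\<close>, and by the triangle inequality its cost is at most the sum of the two costs.
  Taking infima over both matchings yields the triangle inequality for the resolution distance.\<close>

text \<open>The library's \<open>INF_ennreal_add_const\<close> only covers sequences.\<close>

lemma INF_ennreal_add_const_on:
  fixes f :: "'a \<Rightarrow> ennreal"
  shows "(INF i\<in>A. f i + c) = (INF i\<in>A. f i) + c"
proof (cases "A = {}")
  case False
  then show ?thesis
    using continuous_at_Inf_mono[of "\<lambda>x. x + c" "f ` A"]
      continuous_add[of "at_right (Inf (f ` A))" "\<lambda>x. x" "\<lambda>x. c"]
    by (auto simp: mono_def image_comp)
qed simp

lemma le_INF_add_INF_ennreal:
  fixes f :: "'a \<Rightarrow> ennreal" and g :: "'b \<Rightarrow> ennreal"
  assumes "\<And>a b. a \<in> A \<Longrightarrow> b \<in> B \<Longrightarrow> c \<le> f a + g b"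
  shows "c \<le> (INF a\<in>A. f a) + (INF b\<in>B. g b)"
proof -
  have "(INF a\<in>A. f a) + (INF b\<in>B. g b) = (INF a\<in>A. (INF b\<in>B. g b) + f a)"
    by (simp add: INF_ennreal_add_const_on add.commute)
  also have "\<dots> = (INF a\<in>A. INF b\<in>B. g b + f a)"
    by (simp add: INF_ennreal_add_const_on)
  finally show ?thesis
    using assms by (auto intro!: INF_greatest simp: add.commute)
qed

lemma is_metric_nonneg:
  assumes "is_metric d"
  shows "0 \<le> d x y"
proof -
  have "d x x \<le> d x y + d y x" and "d x x = 0" and "d y x = d x y"
    using assms unfolding is_metric_def by blast+
  then show ?thesis by simp
qed

lemma is_matching_bij_betw:
  assumes "is_matching E F B"
  shows "bij_betw (B i) {..<rnum E i} {..<rnum F i}"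
  using assms unfolding is_matching_def by blast

lemma is_matching_comp:
  assumes EF: "is_matching E F B" and FG: "is_matching F G C"
  shows "is_matching E G (\<lambda>i. C i \<circ> B i)"
  unfolding is_matching_def
proof (intro conjI allI impI)
  fix i
  show "bij_betw (C i \<circ> B i) {..<rnum E i} {..<rnum G i}"
    using is_matching_bij_betw[OF EF] is_matching_bij_betw[OF FG] by (rule bij_betw_trans)
next
  fix i x x'
  assume "x < rnum E i" "x' < rnum E (Suc i)"
  moreover from this have "B i x < rnum F i" "B (Suc i) x' < rnum F (Suc i)"
    using is_matching_bij_betw[OF EF] by (auto simp: bij_betw_def)
  ultimately show "rmat E i x' x = rmat G i ((C (Suc i) \<circ> B (Suc i)) x') ((C i \<circ> B i) x)"
    using EF FG unfolding is_matching_def by (metis comp_apply)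
qed

lemma matching_cost_comp_le:
  assumes d: "is_metric d" and EF: "is_matching E F B" and FG: "is_matching F G C"
  shows "matching_cost d E G (\<lambda>i. C i \<circ> B i) \<le> matching_cost d E F B + matching_cost d F G C"
proof -
  have "ennreal (d (rsmd E i x) (rsmd G i (C i (B i x))))
      \<le> matching_cost d E F B + matching_cost d F G C" if x: "x < rnum E i" for i x
  proof -
    have Bx: "B i x < rnum F i"
      using x is_matching_bij_betw[OF EF] by (auto simp: bij_betw_def)
    let ?e = "rsmd E i x" and ?f = "rsmd F i (B i x)" and ?g = "rsmd G i (C i (B i x))"
    have "ennreal (d ?e ?g) \<le> ennreal (d ?e ?f + d ?f ?g)"
      using d by (simp add: is_metric_def ennreal_leI)
    also have "\<dots> = ennreal (d ?e ?f) + ennreal (d ?f ?g)"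
      using is_metric_nonneg[OF d] by simp
    also have "\<dots> \<le> matching_cost d E F B + matching_cost d F G C"
      unfolding matching_cost_def
    proof (rule add_mono)
      show "ennreal (d ?e ?f) \<le> (SUP p\<in>{(i, x). x < rnum E i}.
          ennreal (d (rsmd E (fst p) (snd p)) (rsmd F (fst p) (B (fst p) (snd p)))))"
        using x by (intro SUP_upper2[where i="(i, x)"]) auto
      show "ennreal (d ?f ?g) \<le> (SUP p\<in>{(i, x). x < rnum F i}.
          ennreal (d (rsmd F (fst p) (snd p)) (rsmd G (fst p) (C (fst p) (snd p)))))"
        using Bx by (intro SUP_upper2[where i="(i, B i x)"]) auto
    qed
    finally show ?thesis .
  qed
  then show ?thesis
    unfolding matching_cost_def[of d E G] by (auto intro!: SUP_least)
qed

theorem lemma4p5: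
  fixes d :: "'p::{order,finite} \<Rightarrow> 'p \<Rightarrow> real"
    and M N O' :: "('p, 'k::field) pmod"
    and E F G :: "('p, 'k) presol"
  assumes "is_metric d"
    and "is_pmod M" and "is_pmod N" and "is_pmod O'"
    and "is_proj_resolution M E" and "is_proj_resolution N F" and "is_proj_resolution O' G"
    and "\<forall>i. rnum E i = rnum F i \<and> rnum F i = rnum G i"
  shows "distR d E G \<le> distR d E F + distR d F G"
  unfolding distR_def
proof (rule le_INF_add_INF_ennreal, clarify)
  fix B C
  assume EF: "is_matching E F B" and FG: "is_matching F G C"
  have "(INF A\<in>{A. is_matching E G A}. matching_cost d E G A) \<le> matching_cost d E G (\<lambda>i. C i \<circ> B i)"
    using is_matching_comp[OF EF FG] by (auto intro: INF_lower)
  also have "\<dots> \<le> matching_cost d E F B + matching_cost d F G C"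
    using matching_cost_comp_le[OF \<open>is_metric d\<close> EF FG] .
  finally show "(INF A\<in>{A. is_matching E G A}. matching_cost d E G A)
      \<le> matching_cost d E F B + matching_cost d F G C" .
qed

end
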